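(* Let $m$ be a positive integer and $n=m(m+1)/2$, and write $\prod_{i=1}^m(1-X^i)=\sum_{i=0}^n c_iX^i$. The matrix $\mathsf R$ with rows indexed by positive integers $k$, columns indexed by non-empty subsets $S\subseteq[1,m]$, and $(k,S)$ entry $r(k,S)$, has rank $n$ over $\mathbb{Q}$. Moreover, for all $k>n$ and all non-empty $S\subseteq[1,m]$, $$r(k,S)=-\sum_{j=k-n}^{k-1}c_{k-j}\,r(j,S).$$
   Context: $r(k,S)$ is the number of partitions $\lambda$ of $k$ such that every part of $\lambda$ lies in $S$ and every element of $S$ occurs as a part of $\lambda$ (i.e. the set of distinct parts of $\lambda$ is exactly $S$). $[1,m]=\{1,\dots,m\}$. *)

theory Defs
  imports Main "HOL-Library.Multiset" "HOL-Computational_Algebra.Polynomial"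
begin

definition r :: "nat \<Rightarrow> nat set \<Rightarrow> nat" where
  "r k S = card {p :: nat multiset. 0 \<notin># p \<and> sum_mset p = k \<and> set_mset p = S}"

definition c :: "nat \<Rightarrow> nat \<Rightarrow> int" where
  "c m i = coeff (\<Prod>j\<in>{1..m}. (1 - monom 1 j) :: int poly) i"

definition indep_rows :: "'r set \<Rightarrow> 'c set \<Rightarrow> ('r \<Rightarrow> 'c \<Rightarrow> rat) \<Rightarrow> bool" where
  "indep_rows K C M \<longleftrightarrow> finite K \<and>
     (\<forall>a :: 'r \<Rightarrow> rat. (\<forall>s\<in>C. (\<Sum>k\<in>K. a k * M k s) = 0) \<longrightarrow> (\<forall>k\<in>K. a k = 0))"

definition matrix_rank :: "'r set \<Rightarrow> 'c set \<Rightarrow> ('r \<Rightarrow> 'c \<Rightarrow> rat) \<Rightarrow> nat" where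
  "matrix_rank Rw C M = Sup (card ` {K. K \<subseteq> Rw \<and> indep_rows K C M})"

end

theory Submission
  imports Defs "HOL-Computational_Algebra.Polynomial_FPS"
begin

(* Write D = prod_{i=1}^m (1 - X^i) and n = m(m+1)/2 = deg D.  Splitting off one part
   at a time shows that the generating function R_S = sum_k r(k,S) X^k satisfies
     R_S * D = N_S,  where  N_S = prod_{s in S} X^s * prod_{i in [1,m]-S} (1 - X^i)
   is a polynomial of degree at most n.  Comparing coefficients of X^k for k > n gives the
   recurrence with the coefficients c_i of D, and the recurrence puts every row of the matrix
   into the span of the rows 1..n.  Conversely, a relation sum_{k<=n} a_k r(k,S) = 0 for all
   non-empty S is a linear functional Q |-> sum_k a_k [X^k](Q/D) vanishing on every N_S with
   S non-empty; since X^t is a sum of such N_S for 1 <= t <= n, it vanishes on X^t, and the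
   resulting triangular system forces a = 0.  Hence rows 1..n are a basis of the row space. *)

section \<open>Partitions with a prescribed set of parts\<close>

definition parts :: "nat \<Rightarrow> nat set \<Rightarrow> nat multiset set" where
  "parts k S = {p. 0 \<notin># p \<and> sum_mset p = k \<and> set_mset p = S}"

lemma r_parts: "r k S = card (parts k S)"
  by (simp add: r_def parts_def)

lemma mem_le_sum_mset: "x \<in># p \<Longrightarrow> x \<le> sum_mset (p :: nat multiset)"
  by (metis le_add1 multi_member_split sum_mset.add_mset)

lemma size_le_sum_mset: "0 \<notin># p \<Longrightarrow> size p \<le> sum_mset (p :: nat multiset)"
  by (induction p) (auto simp: Suc_le_eq gr0I)

lemma finite_parts: "finite (parts k S)"
proof -
  have "parts k S \<subseteq> mset ` {xs. set xs \<subseteq> {0..k} \<and> length xs \<le> k}"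
  proof
    fix p assume p: "p \<in> parts k S"
    have "set (sorted_list_of_multiset p) \<subseteq> {0..k}"
      using p by (auto simp: parts_def dest!: mem_le_sum_mset)
    moreover have "length (sorted_list_of_multiset p) \<le> k"
      using p size_le_sum_mset[of p] by (auto simp: parts_def simp flip: size_mset)
    ultimately show "p \<in> mset ` {xs. set xs \<subseteq> {0..k} \<and> length xs \<le> k}"
      by (intro image_eqI[of _ _ "sorted_list_of_multiset p"]) auto
  qed
  then show ?thesis
    using finite_lists_length_le[of "{0..k}" k] finite_subset by blast
qed

lemma r_empty: "r k {} = (if k = 0 then 1 else 0)"
proof -
  have "parts k {} = (if k = 0 then {{#}} else {})"
    by (auto simp: parts_def)
  then show ?thesis by (simp add: r_parts)
qed

text \<open>Removing one copy of the part s from a partition with part set insert s F leaves a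
  partition of k - s whose part set is either still insert s F or just F.\<close>
lemma parts_insert:
  assumes "s \<notin> F" "0 < s"
  shows "parts k (insert s F) =
           (if k < s then {} else add_mset s ` (parts (k - s) (insert s F) \<union> parts (k - s) F))"
proof (cases "k < s")
  case True
  have "s \<le> k" if "p \<in> parts k (insert s F)" for p
    using that mem_le_sum_mset[of s p] by (simp add: parts_def)
  then show ?thesis
    using True by fastforce
next
  case False
  have "p \<in> add_mset s ` (parts (k - s) (insert s F) \<union> parts (k - s) F)"
    if p: "p \<in> parts k (insert s F)" for p
  proof -
    define q where "q = p - {#s#}"
    have pq: "p = add_mset s q"
      using p by (simp add: q_def parts_def)
    have "0 \<notin># q" "sum_mset q = k - s" "insert s (set_mset q) = insert s F"
      using p by (auto simp: pq parts_def)
    moreover from this(3) have "set_mset q = insert s F \<or> set_mset q = F"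
      using assms(1) by (metis insert_absorb insert_ident)
    ultimately have "q \<in> parts (k - s) (insert s F) \<union> parts (k - s) F"
      by (auto simp: parts_def)
    then show ?thesis
      by (simp add: pq)
  qed
  moreover have "add_mset s q \<in> parts k (insert s F)"
    if "q \<in> parts (k - s) (insert s F) \<union> parts (k - s) F" for q
  proof -
    have "0 \<notin># q" "sum_mset q = k - s" "insert s (set_mset q) = insert s F"
      using that by (auto simp: parts_def)
    then show ?thesis
      using False assms(2) by (simp add: parts_def) (metis insertCI insertE less_irrefl)
  qed
  ultimately show ?thesis
    using False by auto
qed

lemma r_insert:
  assumes "s \<notin> F" "0 < s"
  shows "r k (insert s F) = (if k < s then 0 else r (k - s) (insert s F) + r (k - s) F)"
proof -
  have disj: "parts (k - s) (insert s F) \<inter> parts (k - s) F = {}"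
    using assms(1) by (auto simp: parts_def)
  have "inj_on (add_mset s) A" for A
    by (simp add: inj_on_def)
  then have "card (add_mset s ` (parts (k - s) (insert s F) \<union> parts (k - s) F)) =
               card (parts (k - s) (insert s F)) + card (parts (k - s) F)"
    by (simp add: card_image card_Un_disjoint[OF finite_parts finite_parts disj])
  then show ?thesis
    unfolding r_parts parts_insert[OF assms, of k] by simp
qed

section \<open>The generating function of a column\<close>

definition part_gf :: "nat set \<Rightarrow> 'a::comm_ring_1 fps" where
  "part_gf S = Abs_fps (\<lambda>k. of_nat (r k S))"

lemma part_gf_empty: "part_gf {} = 1"
  by (rule fps_ext) (simp add: part_gf_def r_empty)

lemma part_gf_insert:
  assumes "s \<notin> F" "0 < s"
  shows "part_gf (insert s F) * (1 - fps_X ^ s) = (fps_X ^ s * part_gf F :: 'a::comm_ring_1 fps)"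
proof (rule fps_ext)
  fix k
  have "fps_nth (part_gf (insert s F) * (1 - fps_X ^ s) :: 'a fps) k =
          fps_nth (part_gf (insert s F)) k - fps_nth (part_gf (insert s F) * fps_X ^ s) k"
    by (simp add: right_diff_distrib)
  also have "\<dots> = fps_nth (fps_X ^ s * part_gf F :: 'a fps) k"
    unfolding fps_X_power_mult_right_nth fps_X_power_mult_nth
    using r_insert[OF assms, of k] by (simp add: part_gf_def)
  finally show "fps_nth (part_gf (insert s F) * (1 - fps_X ^ s) :: 'a fps) k =
                  fps_nth (fps_X ^ s * part_gf F) k" .
qed

lemma part_gf_mult_prod:
  assumes "finite T" "S \<subseteq> T" "0 \<notin> T"
  shows "part_gf S * (\<Prod>i\<in>T. 1 - fps_X ^ i) =
           (\<Prod>s\<in>S. fps_X ^ s) * (\<Prod>i\<in>T - S. 1 - fps_X ^ i :: 'a::comm_ring_1 fps)"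
proof -
  have "finite S" using assms finite_subset by blast
  then show ?thesis
    using assms
  proof (induction S arbitrary: T rule: finite_induct)
    case empty
    then show ?case by (simp add: part_gf_empty)
  next
    case (insert s F T)
    have s: "s \<in> T" "0 < s"
      using insert.prems by (auto intro!: gr0I)
    have IH: "part_gf F * (\<Prod>i\<in>T - {s}. 1 - fps_X ^ i) =
                (\<Prod>s\<in>F. fps_X ^ s) * (\<Prod>i\<in>T - {s} - F. 1 - fps_X ^ i :: 'a fps)"
      using insert.prems insert.hyps(2) by (intro insert.IH) auto
    have "(\<Prod>i\<in>T. 1 - fps_X ^ i :: 'a fps) = (1 - fps_X ^ s) * (\<Prod>i\<in>T - {s}. 1 - fps_X ^ i)"
      using insert.prems(1) s(1) by (rule prod.remove)
    then have "part_gf (insert s F) * (\<Prod>i\<in>T. 1 - fps_X ^ i :: 'a fps)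
        = (part_gf (insert s F) * (1 - fps_X ^ s)) * (\<Prod>i\<in>T - {s}. 1 - fps_X ^ i)"
      by (simp add: mult.assoc)
    also have "\<dots> = fps_X ^ s * (part_gf F * (\<Prod>i\<in>T - {s}. 1 - fps_X ^ i))"
      by (simp add: part_gf_insert[OF insert(2) s(2)] mult.assoc)
    also have "\<dots> = (\<Prod>s\<in>insert s F. fps_X ^ s) * (\<Prod>i\<in>T - insert s F. 1 - fps_X ^ i)"
      using IH insert(1,2) by (simp add: mult.assoc Diff_insert2[symmetric] insert_commute)
    finally show ?case .
  qed
qed

section \<open>The numerator polynomials and the recurrence\<close>

text \<open>numer m S is N_S; numer m {} is the denominator D = prod_{i=1}^m (1 - X^i).\<close>
definition numer :: "nat \<Rightarrow> nat set \<Rightarrow> 'a::comm_ring_1 poly" where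
  "numer m S = (\<Prod>s\<in>S. monom 1 s) * (\<Prod>i\<in>{1..m} - S. 1 - monom 1 i)"

lemma fps_of_poly_numer:
  "fps_of_poly (numer m S) = (\<Prod>s\<in>S. fps_X ^ s) * (\<Prod>i\<in>{1..m} - S. 1 - fps_X ^ i)"
  by (simp add: numer_def fps_of_poly_mult fps_of_poly_prod fps_of_poly_diff fps_of_poly_monom')

lemma part_gf_mult_denom:
  assumes "S \<subseteq> {1..m}"
  shows "part_gf S * fps_of_poly (numer m {}) = fps_of_poly (numer m S :: 'a::comm_ring_1 poly)"
  using part_gf_mult_prod[of "{1..m}" S] assms by (simp add: fps_of_poly_numer)

text \<open>Every factor X^s or 1 - X^s has degree at most s, and the exponents add up to n.\<close>
lemma degree_numer:
  assumes "S \<subseteq> {1..m}"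
  shows "degree (numer m S :: 'a::comm_ring_1 poly) \<le> m * (m + 1) div 2"
proof -
  have fin: "finite S" "finite ({1..m} - S)"
    using assms finite_subset by auto
  have "degree (\<Prod>s\<in>S. monom 1 s :: 'a poly) \<le> (\<Sum>s\<in>S. degree (monom 1 s :: 'a poly))"
    using degree_prod_sum_le[OF fin(1), of "\<lambda>s. monom 1 s"] by (simp add: o_def)
  also have "\<dots> \<le> \<Sum>S"
    by (intro sum_mono degree_monom_le)
  finally have d1: "degree (\<Prod>s\<in>S. monom 1 s :: 'a poly) \<le> \<Sum>S" .
  have "degree (\<Prod>i\<in>{1..m} - S. 1 - monom 1 i :: 'a poly)
          \<le> (\<Sum>i\<in>{1..m} - S. degree (1 - monom 1 i :: 'a poly))"
    using degree_prod_sum_le[OF fin(2), of "\<lambda>i. 1 - monom 1 i"] by (simp add: o_def)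
  also have "\<dots> \<le> \<Sum>({1..m} - S)"
    by (intro sum_mono degree_diff_le) (auto simp: degree_monom_le)
  finally have d2: "degree (\<Prod>i\<in>{1..m} - S. 1 - monom 1 i :: 'a poly) \<le> \<Sum>({1..m} - S)" .
  have "degree (numer m S :: 'a poly) \<le> \<Sum>S + \<Sum>({1..m} - S)"
    unfolding numer_def using degree_mult_le d1 d2 by (meson add_mono order_trans)
  also have "\<dots> = \<Sum>{1..m}"
    using sum.subset_diff[OF assms, of id] by simp
  also have "\<dots> = m * (m + 1) div 2"
    by (simp add: Sum_Icc_nat)
  finally show ?thesis .
qed

lemma coeff_0_numer_empty: "coeff (numer m {} :: 'a::comm_ring_1 poly) 0 = 1"
proof -
  have "coeff (numer m {} :: 'a poly) 0 = poly (numer m {}) 0"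
    by (simp add: poly_0_coeff_0)
  also have "\<dots> = (\<Prod>j\<in>{1..m}. 1 - 0 ^ j :: 'a)"
    by (simp add: numer_def poly_prod poly_monom)
  also have "\<dots> = 1"
    by (rule prod.neutral) (auto simp: power_0_left)
  finally show ?thesis .
qed

lemma c_numer: "c m i = coeff (numer m {} :: int poly) i"
  by (simp add: c_def numer_def)

lemma c_0: "c m 0 = 1"
  by (simp add: c_numer coeff_0_numer_empty)

lemma c_eq_0: "m * (m + 1) div 2 < i \<Longrightarrow> c m i = 0"
  unfolding c_numer using degree_numer[of "{}" m, where 'a=int] by (intro coeff_eq_0) auto

text \<open>The recurrence: the coefficient of X^k in R_S * D vanishes for k > n = deg N_S.\<close>
lemma r_recurrence:
  assumes "S \<subseteq> {1..m}" "m * (m + 1) div 2 < k"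
  shows "int (r k S) = - (\<Sum>j = k - m * (m + 1) div 2 .. k - 1. c m (k - j) * int (r j S))"
proof -
  define n where "n = m * (m + 1) div 2"
  define f where "f j = int (r j S) * c m (k - j)" for j
  have "(\<Sum>j = 0..k. f j) = fps_nth (part_gf S * fps_of_poly (numer m {}) :: int fps) k"
    by (simp add: fps_mult_nth part_gf_def f_def c_numer)
  also have "\<dots> = coeff (numer m S :: int poly) k"
    by (simp add: part_gf_mult_denom[OF assms(1)])
  also have "\<dots> = 0"
    using degree_numer[OF assms(1), where 'a=int] assms(2) by (intro coeff_eq_0) auto
  finally have "(\<Sum>j = 0..k. f j) = 0" .
  moreover have "(\<Sum>j = 0..k. f j) = (\<Sum>j = k - n..k. f j)"
    by (rule sum.mono_neutral_right) (auto simp: f_def n_def intro!: c_eq_0)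
  moreover have "{k - n..k} = insert k {k - n..k - 1}"
    using assms(2) by (auto simp: n_def)
  moreover have "k \<notin> {k - n..k - 1}"
    using assms(2) by (auto simp: n_def)
  ultimately show ?thesis
    by (simp add: f_def n_def c_0 mult.commute eq_neg_iff_add_eq_0)
qed

lemma recurrent_rows_in_span:
  fixes f :: "nat \<Rightarrow> 'i \<Rightarrow> 'a::comm_ring_1"
  assumes rec: "\<And>k i. n < k \<Longrightarrow> i \<in> I \<Longrightarrow> f k i = (\<Sum>j = k - n..k - 1. g (k - j) * f j i)"
    and "1 \<le> k"
  shows "\<exists>\<beta>. \<forall>i\<in>I. f k i = (\<Sum>j = 1..n. \<beta> j * f j i)"
  using assms(2)
proof (induction k rule: less_induct)
  case (less k)
  show ?case
  proof (cases "k \<le> n")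
    case True
    have "(\<Sum>j = 1..n. (if j = k then 1 else 0) * f j i) = f k i" for i
    proof -
      have "(\<Sum>j = 1..n. (if j = k then 1 else 0) * f j i) = (\<Sum>j = 1..n. if j = k then f j i else 0)"
        by (rule sum.cong) auto
      then show ?thesis
        using True less.prems by simp
    qed
    then show ?thesis
      by (auto intro!: exI[of _ "\<lambda>j. if j = k then 1 else 0"])
  next
    case False
    then have "\<forall>l\<in>{k - n..k - 1}. \<exists>\<beta>. \<forall>i\<in>I. f l i = (\<Sum>j = 1..n. \<beta> j * f j i)"
      using less.IH by auto
    then obtain B where B: "\<And>l i. l \<in> {k - n..k - 1} \<Longrightarrow> i \<in> I \<Longrightarrow> f l i = (\<Sum>j = 1..n. B l j * f j i)"
      by metis
    have "f k i = (\<Sum>j = 1..n. (\<Sum>l = k - n..k - 1. g (k - l) * B l j) * f j i)" if "i \<in> I" for i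
    proof -
      have "f k i = (\<Sum>l = k - n..k - 1. g (k - l) * (\<Sum>j = 1..n. B l j * f j i))"
        using rec[OF _ that] False B[OF _ that] by simp
      also have "\<dots> = (\<Sum>j = 1..n. (\<Sum>l = k - n..k - 1. g (k - l) * B l j) * f j i)"
        by (simp add: sum_distrib_left sum_distrib_right mult.assoc) (rule sum.swap)
      finally show ?thesis .
    qed
    then show ?thesis
      by (auto intro!: exI[of _ "\<lambda>j. \<Sum>l = k - n..k - 1. g (k - l) * B l j"])
  qed
qed

lemma r_rows_in_span:
  assumes "1 \<le> k"
  shows "\<exists>\<beta>. \<forall>S\<in>{S. S \<subseteq> {1..m} \<and> S \<noteq> {}}.
           (of_nat (r k S) :: rat) = (\<Sum>j = 1..m * (m + 1) div 2. \<beta> j * of_nat (r j S))"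
proof (rule recurrent_rows_in_span[OF _ assms])
  fix k :: nat and S
  assume "m * (m + 1) div 2 < k" "S \<in> {S. S \<subseteq> {1..m} \<and> S \<noteq> {}}"
  then have "int (r k S) = - (\<Sum>j = k - m * (m + 1) div 2 .. k - 1. c m (k - j) * int (r j S))"
    by (intro r_recurrence) auto
  then have "(of_int (int (r k S)) :: rat) =
      of_int (- (\<Sum>j = k - m * (m + 1) div 2 .. k - 1. c m (k - j) * int (r j S)))"
    by (rule arg_cong)
  then show "(of_nat (r k S) :: rat) =
      (\<Sum>j = k - m * (m + 1) div 2..k - 1. - of_int (c m (k - j)) * of_nat (r j S))"
    by (simp add: sum_negf)
qed

section \<open>Independence of the rows 1, ..., n\<close>

lemma subset_sum_exists:
  fixes t m :: nat
  assumes "1 \<le> t" "t \<le> m * (m + 1) div 2"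
  shows "\<exists>U. U \<subseteq> {1..m} \<and> U \<noteq> {} \<and> \<Sum>U = t"
  using assms
proof (induction m arbitrary: t)
  case 0
  then show ?case by simp
next
  case (Suc m)
  show ?case
  proof (cases "t \<le> Suc m")
    case True
    then show ?thesis
      using Suc.prems by (intro exI[of _ "{t}"]) auto
  next
    case False
    have "Suc m * (Suc m + 1) div 2 = m * (m + 1) div 2 + Suc m"
      by (induction m) auto
    then have "1 \<le> t - Suc m" "t - Suc m \<le> m * (m + 1) div 2"
      using Suc.prems False by auto
    then obtain U where U: "U \<subseteq> {1..m}" "U \<noteq> {}" "\<Sum>U = t - Suc m"
      using Suc.IH by blast
    then have "Suc m \<notin> U" "finite U"
      using finite_subset by auto
    then show ?thesis
      using U False by (intro exI[of _ "insert (Suc m) U"]) auto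
  qed
qed

text \<open>Expanding prod_{i in W} (X^i + (1 - X^i)) with W = [1,m] - U writes X^(sum U) as the sum
  of the numerators N_S over all S containing U.\<close>
lemma X_power_sum_numer:
  assumes "U \<subseteq> {1..m}"
  shows "(fps_X ^ (\<Sum>U) :: 'a::comm_ring_1 fps) = (\<Sum>B\<in>Pow ({1..m} - U). fps_of_poly (numer m (U \<union> B)))"
proof -
  define W where "W = {1..m} - U"
  have fU: "finite U" using assms finite_subset by blast
  have "(fps_X ^ (\<Sum>U) :: 'a fps) = (\<Prod>i\<in>U. fps_X ^ i) * (\<Prod>i\<in>W. fps_X ^ i + (1 - fps_X ^ i))"
    by (simp add: power_sum)
  also have "\<dots> = (\<Prod>i\<in>U. fps_X ^ i) * (\<Sum>B\<in>Pow W. (\<Prod>i\<in>B. fps_X ^ i) * (\<Prod>i\<in>W - B. 1 - fps_X ^ i))"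
    by (subst prod_add) (simp_all add: W_def)
  also have "\<dots> = (\<Sum>B\<in>Pow W. (\<Prod>i\<in>U. fps_X ^ i) * (\<Prod>i\<in>B. fps_X ^ i) * (\<Prod>i\<in>W - B. 1 - fps_X ^ i))"
    by (simp add: sum_distrib_left mult.assoc)
  also have "\<dots> = (\<Sum>B\<in>Pow W. fps_of_poly (numer m (U \<union> B)))"
  proof (rule sum.cong[OF refl])
    fix B assume "B \<in> Pow W"
    then have "finite B" "U \<inter> B = {}" "W - B = {1..m} - (U \<union> B)"
      by (auto simp: W_def intro: finite_subset)
    then show "(\<Prod>i\<in>U. fps_X ^ i) * (\<Prod>i\<in>B. fps_X ^ i) * (\<Prod>i\<in>W - B. 1 - fps_X ^ i) =
               (fps_of_poly (numer m (U \<union> B)) :: 'a fps)"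
      using fU by (simp add: fps_of_poly_numer prod.union_disjoint)
  qed
  finally show ?thesis by (simp add: W_def)
qed

text \<open>A triangular system: if the functional Q |-> sum_{k=1}^n a_k [X^k](Q E) with E(0) <> 0
  kills X^1, ..., X^n, then all a_k vanish (look at the largest k with a_k <> 0).\<close>
lemma shifted_coeff_functional_trivial:
  fixes E :: "'a::idom fps"
  assumes E0: "fps_nth E 0 \<noteq> 0"
    and kills: "\<And>t. t \<in> {1..n} \<Longrightarrow> (\<Sum>k = 1..n. a k * fps_nth (fps_X ^ t * E) k) = 0"
  shows "\<forall>k\<in>{1..n}. a k = 0"
proof (rule ccontr)
  define A where "A = {k\<in>{1..n}. a k \<noteq> 0}"
  assume "\<not> (\<forall>k\<in>{1..n}. a k = 0)"
  then have "A \<noteq> {}" by (auto simp: A_def)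
  define t where "t = Max A"
  have t: "t \<in> {1..n}" "a t \<noteq> 0"
    using Max_in[OF _ \<open>A \<noteq> {}\<close>] by (auto simp: t_def A_def)
  have above_t: "a k = 0" if "k \<in> {1..n}" "t < k" for k
  proof (rule ccontr)
    assume "a k \<noteq> 0"
    then have "k \<le> t"
      using that(1) unfolding t_def by (intro Max_ge) (auto simp: A_def)
    then show False
      using that(2) by simp
  qed
  have "(\<Sum>k = 1..n. a k * fps_nth (fps_X ^ t * E) k) = (\<Sum>k\<in>{t}. a k * fps_nth (fps_X ^ t * E) k)"
    by (rule sum.mono_neutral_right) (use t above_t in \<open>auto simp: fps_X_power_mult_nth\<close>)
  also have "\<dots> = a t * fps_nth E 0"
    by (simp add: fps_X_power_mult_nth)
  finally show False
    using kills[OF t(1)] t(2) E0 by simp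
qed

lemma r_rows_independent:
  assumes rel: "\<And>S. S \<subseteq> {1..m} \<Longrightarrow> S \<noteq> {} \<Longrightarrow>
                  (\<Sum>k = 1..m * (m + 1) div 2. a k * of_nat (r k S)) = (0 :: rat)"
  shows "\<forall>k\<in>{1..m * (m + 1) div 2}. a k = 0"
proof -
  define n where "n = m * (m + 1) div 2"
  define D where "D = (fps_of_poly (numer m {}) :: rat fps)"
  define E where "E = inverse D"
  define L where "L Q = (\<Sum>k = 1..n. a k * fps_nth (Q * E) k)" for Q
  have D0: "fps_nth D 0 = 1"
    by (simp add: D_def coeff_0_numer_empty)
  have L_sum: "L (sum g B) = (\<Sum>x\<in>B. L (g x))" for g and B :: "'b set"
    by (simp add: L_def sum_distrib_right fps_sum_nth sum_distrib_left sum.swap[of _ B])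
  have L_numer: "L (fps_of_poly (numer m S)) = 0" if "S \<subseteq> {1..m}" "S \<noteq> {}" for S
  proof -
    have "fps_of_poly (numer m S) * E = part_gf S * (D * E)"
      by (simp add: part_gf_mult_denom[OF that(1)] D_def mult.assoc)
    also have "\<dots> = part_gf S"
      by (simp add: E_def D0 inverse_mult_eq_1')
    finally show ?thesis
      using rel[OF that] by (simp add: L_def part_gf_def n_def)
  qed
  have "L (fps_X ^ t) = 0" if "t \<in> {1..n}" for t
  proof -
    have "1 \<le> t" "t \<le> m * (m + 1) div 2"
      using that by (auto simp: n_def)
    then obtain U where U: "U \<subseteq> {1..m}" "U \<noteq> {}" "\<Sum>U = t"
      using subset_sum_exists by blast
    have "L (fps_X ^ t) = L (\<Sum>B\<in>Pow ({1..m} - U). fps_of_poly (numer m (U \<union> B)))"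
      using X_power_sum_numer[OF U(1), where 'a=rat] U(3) by simp
    also have "\<dots> = (\<Sum>B\<in>Pow ({1..m} - U). L (fps_of_poly (numer m (U \<union> B))))"
      by (rule L_sum)
    also have "\<dots> = 0"
      using U by (intro sum.neutral) (auto intro!: L_numer)
    finally show ?thesis .
  qed
  moreover have "fps_nth E 0 \<noteq> 0"
    by (simp add: E_def D0)
  ultimately show ?thesis
    using shifted_coeff_functional_trivial[of E n a] by (simp add: L_def n_def)
qed

section \<open>Rank of a family of rows\<close>

lemma homogeneous_system_nontrivial_solution:
  assumes "finite J" "finite K" "card J < card K"
  shows "\<exists>a. (\<exists>k\<in>K. a k \<noteq> 0) \<and> (\<forall>j\<in>J. (\<Sum>k\<in>K. a k * b k j) = (0 :: 'a::field))"
  using assms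
proof (induction J arbitrary: K b rule: finite_induct)
  case empty
  then obtain k0 where "k0 \<in> K" by fastforce
  then show ?case by (intro exI[of _ "\<lambda>k. if k = k0 then 1 else 0"]) auto
next
  case (insert j J K b)
  show ?case
  proof (cases "\<forall>k\<in>K. b k j = 0")
    case True
    then show ?thesis
      using insert.IH[of K b] insert.prems insert.hyps by auto
  next
    case False
    then obtain k0 where k0: "k0 \<in> K" "b k0 j \<noteq> 0" by auto
    define K' where "K' = K - {k0}"
    \<comment> \<open>use the equation j to eliminate the unknown k0 from the other equations\<close>
    define b' where "b' k i = b k i - b k j / b k0 j * b k0 i" for k i
    have "finite K'" "card J < card K'"
      using insert.prems insert.hyps k0 by (auto simp: K'_def)
    then obtain a' where a': "\<exists>k\<in>K'. a' k \<noteq> 0" "\<forall>i\<in>J. (\<Sum>k\<in>K'. a' k * b' k i) = 0"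
      using insert.IH by blast
    define a where "a = a'(k0 := - (\<Sum>k\<in>K'. a' k * b k j) / b k0 j)"
    have eliminated: "(\<Sum>k\<in>K. a k * b k i) = (\<Sum>k\<in>K'. a' k * b' k i)" for i
    proof -
      have "(\<Sum>k\<in>K. a k * b k i) = a k0 * b k0 i + (\<Sum>k\<in>K'. a k * b k i)"
        unfolding K'_def by (rule sum.remove[OF insert.prems(1) k0(1)])
      also have "(\<Sum>k\<in>K'. a k * b k i) = (\<Sum>k\<in>K'. a' k * b k i)"
        by (rule sum.cong) (auto simp: a_def K'_def)
      also have "(\<Sum>k\<in>K'. a' k * b' k i) =
                   (\<Sum>k\<in>K'. a' k * b k i) - (\<Sum>k\<in>K'. a' k * b k j) / b k0 j * b k0 i"
        by (simp add: b'_def right_diff_distrib sum_subtractf sum_distrib_right sum_divide_distrib mult.assoc)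
      ultimately show ?thesis
        by (simp add: a_def)
    qed
    have "b' k j = 0" for k
      using k0(2) by (simp add: b'_def)
    then have "\<forall>i\<in>insert j J. (\<Sum>k\<in>K. a k * b k i) = 0"
      using a'(2) by (simp add: eliminated)
    moreover have "\<exists>k\<in>K. a k \<noteq> 0"
      using a'(1) by (auto simp: a_def K'_def)
    ultimately show ?thesis by blast
  qed
qed

lemma indep_rows_card_le:
  assumes indep: "indep_rows K C M" and "finite J"
    and span: "\<forall>k\<in>K. \<exists>\<beta>. \<forall>s\<in>C. M k s = (\<Sum>j\<in>J. \<beta> j * M j s)"
  shows "card K \<le> card J"
proof (rule ccontr)
  assume "\<not> card K \<le> card J"
  moreover have "finite K"
    using indep by (simp add: indep_rows_def)
  moreover obtain B where B: "\<And>k s. k \<in> K \<Longrightarrow> s \<in> C \<Longrightarrow> M k s = (\<Sum>j\<in>J. B k j * M j s)"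
    using span by metis
  ultimately obtain a where a: "\<exists>k\<in>K. a k \<noteq> 0" "\<forall>j\<in>J. (\<Sum>k\<in>K. a k * B k j) = 0"
    using homogeneous_system_nontrivial_solution[of J K B] \<open>finite J\<close> by auto
  have "(\<Sum>k\<in>K. a k * M k s) = 0" if "s \<in> C" for s
  proof -
    have "(\<Sum>k\<in>K. a k * M k s) = (\<Sum>k\<in>K. a k * (\<Sum>j\<in>J. B k j * M j s))"
      using B that by simp
    also have "\<dots> = (\<Sum>j\<in>J. (\<Sum>k\<in>K. a k * B k j) * M j s)"
      by (simp add: sum_distrib_left sum_distrib_right sum.swap[of _ K] mult.assoc)
    finally show ?thesis
      using a(2) by simp
  qed
  then show False
    using indep a(1) by (auto simp: indep_rows_def)
qed

lemma matrix_rank_eqI: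
  assumes "J \<subseteq> Rw" "indep_rows J C M"
    and span: "\<forall>k\<in>Rw. \<exists>\<beta>. \<forall>s\<in>C. M k s = (\<Sum>j\<in>J. \<beta> j * M j s)"
  shows "matrix_rank Rw C M = card J"
  unfolding matrix_rank_def
proof (rule cSup_eq_maximum)
  show "card J \<in> card ` {K. K \<subseteq> Rw \<and> indep_rows K C M}"
    using assms(1,2) by blast
  show "x \<le> card J" if "x \<in> card ` {K. K \<subseteq> Rw \<and> indep_rows K C M}" for x
    using that assms(2) span indep_rows_card_le[of _ C M J] by (force simp: indep_rows_def)
qed

theorem corollaryA:
  fixes m :: nat
  assumes "m > 0"
  shows "matrix_rank {k :: nat. k > 0} {S. S \<subseteq> {1..m} \<and> S \<noteq> {}} (\<lambda>k S. of_nat (r k S))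
           = m * (m + 1) div 2
       \<and> (\<forall>k > m * (m + 1) div 2. \<forall>S. S \<subseteq> {1..m} \<and> S \<noteq> {} \<longrightarrow>
            int (r k S) = - (\<Sum>j = k - m * (m + 1) div 2 .. k - 1. c m (k - j) * int (r j S)))"
proof
  define n where "n = m * (m + 1) div 2"
  define C where "C = {S. S \<subseteq> {1..m} \<and> S \<noteq> {}}"
  define M where "M = (\<lambda>k S. of_nat (r k S) :: rat)"
  have "indep_rows {1..n} C M"
    using r_rows_independent[of m] by (auto simp: indep_rows_def C_def M_def n_def)
  moreover have "\<forall>k\<in>{k. k > 0}. \<exists>\<beta>. \<forall>S\<in>C. M k S = (\<Sum>j\<in>{1..n}. \<beta> j * M j S)"
    using r_rows_in_span[of _ m] by (auto simp: C_def M_def n_def)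
  ultimately have "matrix_rank {k. k > 0} C M = card {1..n}"
    by (intro matrix_rank_eqI) auto
  then show "matrix_rank {k :: nat. k > 0} {S. S \<subseteq> {1..m} \<and> S \<noteq> {}} (\<lambda>k S. of_nat (r k S))
               = m * (m + 1) div 2"
    by (simp add: C_def M_def n_def)
next
  show "\<forall>k > m * (m + 1) div 2. \<forall>S. S \<subseteq> {1..m} \<and> S \<noteq> {} \<longrightarrow>
          int (r k S) = - (\<Sum>j = k - m * (m + 1) div 2 .. k - 1. c m (k - j) * int (r j S))"
    using r_recurrence by blast
qed

end
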